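(* Every generalized contingent solution for (MOC) is a generalized proximal solution for (MOC).
   Context: Setting (MOC). Fix $T>0$, $I=[0,T]$, integers $n,m,p\ge1$, nonempty compact $U\subset\mathbb{R}^m$; $f:\mathbb{R}^n\times U\to\mathbb{R}^n$ continuous, bounded, and Lipschitz in $x$ uniformly in $u$; $L:\mathbb{R}^n\times U\to\mathbb{R}^p$ continuous, bounded, and Lipschitz in $x$ uniformly in $u$. Euclidean norms/inner products on $\mathbb{R}^p$ and $\mathbb{R}^{1+n+p}$. $P\subset\mathbb{R}^p$: closed convex pointed cone containing $0$ with nonempty interior. For $W:I\times\mathbb{R}^n\rightrightarrows\mathbb{R}^p$, $W_\uparrow(t,x)=W(t,x)+P$. $W$ is an extremal element map if for all $(t,x)$ and $y\in W(t,x)$: $W(t,x)\cap(y-P)=\{y\}$ and $W(t,x)\cap(y+P)=\{y\}$. $(\mathrm{FL})(x)=\mathrm{cl}\,\mathrm{co}\{(f(x,u),L(x,u)):u\in U\}$. Contingent cone: $T_S(z)=\{v:\exists h_k\to0^+,\exists v_k\to v,z+h_kv_k\in S\}$; contingent derivative $DF(z,y)$ has graph $T_{\mathrm{gph}F}(z,y)$, value at $v$ written $DF((z,y);v)$. Proximal normal cone: $N_S(z)=\{v:\exists M>0,\langle v,\bar z-z\rangle\le M\|\bar z-z\|^2\ \forall\bar z\in S\}$; coderivative $D^*F(z,y)(w^* )=\{v^*:(v^*,-w^* )\in N_{\mathrm{gph}F}(z,y)\}$. Generalized contingent solution: an extremal element map $W$ with (i) for all $(t,x)\in[0,T)\times\mathbb{R}^n$,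 $y\in W(t,x)$, some $(\bar f,\bar L)\in(\mathrm{FL})(x)$ satisfies $-\bar L\in DW_\uparrow((t,x,y);(1,\bar f))$; (ii) for all $(t,x)\in(0,T]\times\mathbb{R}^n$, $y\in W(t,x)$, $(f,L)\in(\mathrm{FL})(x)$: $L\in DW_\uparrow((t,x,y);(-1,-f))$; (iii) $W(T,x)=\{0\}$ for all $x$. Generalized proximal solution: an extremal element map $W$ with (i) for all $(t,x)\in(0,T)\times\mathbb{R}^n$, $y\in W(t,x)$, $w^*\in\mathbb{R}^p$, $(\xi^*,v^* )\in D^*W_\uparrow(t,x,y)(w^* )$: $\xi^*+\inf_{(f,L)\in(\mathrm{FL})(x)}(\langle v^*,f\rangle+\langle w^*,L\rangle)=0$; (ii) for all $x$: $W_\uparrow(0,x)\subset\limsup_{t\to0^+,x'\to x}W_\uparrow(t,x')$ and $W_\uparrow(T,x)\subset\limsup_{t\to T^-,x'\to x}W_\uparrow(t,x')$, where $\limsup$ is the set of limits $y$ of $y_k\in W_\uparrow(t_k,x_k)$ with $(t_k,x_k)\to$ the indicated point; (iii) $W(T,x)=\{0\}$. *)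

theory Defs
  imports "HOL-Analysis.Analysis"
begin

(* R^n, R^m, R^p are rendered as abstract Euclidean spaces 'x, 'u, 'y;
   R^{1+n+p} is real \<times> 'x \<times> 'y with the product (Euclidean) norm. *)

definition contingent_cone :: "'a::real_normed_vector set \<Rightarrow> 'a \<Rightarrow> 'a set" where
  "contingent_cone S z = {v. \<exists>h :: nat \<Rightarrow> real. \<exists>vs :: nat \<Rightarrow> 'a.
      (\<forall>k. h k > 0) \<and> h \<longlonglongrightarrow> 0 \<and> vs \<longlonglongrightarrow> v \<and> (\<forall>k. z + h k *\<^sub>R vs k \<in> S)}"

definition proximal_normal_cone :: "'a::real_inner set \<Rightarrow> 'a \<Rightarrow> 'a set" where
  "proximal_normal_cone S z = {v. \<exists>M>0. \<forall>zb\<in>S. inner v (zb - z) \<le> M * (norm (zb - z))\<^sup>2}"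

definition up_map :: "'y::real_vector set \<Rightarrow> (real \<Rightarrow> 'x \<Rightarrow> 'y set) \<Rightarrow> real \<Rightarrow> 'x \<Rightarrow> 'y set" where
  "up_map P W t x = {y + q | y q. y \<in> W t x \<and> q \<in> P}"

definition up_graph :: "real \<Rightarrow> 'y::real_vector set \<Rightarrow> (real \<Rightarrow> 'x \<Rightarrow> 'y set) \<Rightarrow> (real \<times> 'x \<times> 'y) set" where
  "up_graph T P W = {(t, x, y). t \<in> {0..T} \<and> y \<in> up_map P W t x}"

definition contingent_deriv :: "real \<Rightarrow> 'y::euclidean_space set \<Rightarrow> (real \<Rightarrow> 'x::euclidean_space \<Rightarrow> 'y set)
    \<Rightarrow> real \<times> 'x \<times> 'y \<Rightarrow> real \<times> 'x \<Rightarrow> 'y set" where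
  "contingent_deriv T P W z v = {w. (fst v, snd v, w) \<in> contingent_cone (up_graph T P W) z}"

definition coderiv :: "real \<Rightarrow> 'y::euclidean_space set \<Rightarrow> (real \<Rightarrow> 'x::euclidean_space \<Rightarrow> 'y set)
    \<Rightarrow> real \<times> 'x \<times> 'y \<Rightarrow> 'y \<Rightarrow> (real \<times> 'x) set" where
  "coderiv T P W z w = {(xi, v). (xi, v, - w) \<in> proximal_normal_cone (up_graph T P W) z}"

definition FL :: "('x \<Rightarrow> 'u \<Rightarrow> 'x::euclidean_space) \<Rightarrow> ('x \<Rightarrow> 'u \<Rightarrow> 'y::euclidean_space) \<Rightarrow> 'u set \<Rightarrow> 'x \<Rightarrow> ('x \<times> 'y) set" where
  "FL f L U x = closure (convex hull {(f x u, L x u) | u. u \<in> U})"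

definition extremal_map :: "real \<Rightarrow> 'y::real_vector set \<Rightarrow> (real \<Rightarrow> 'x \<Rightarrow> 'y set) \<Rightarrow> bool" where
  "extremal_map T P W \<longleftrightarrow> (\<forall>t\<in>{0..T}. \<forall>x. \<forall>y\<in>W t x.
      W t x \<inter> {y - q | q. q \<in> P} = {y} \<and> W t x \<inter> {y + q | q. q \<in> P} = {y})"

definition gen_contingent_solution :: "real \<Rightarrow> 'y::euclidean_space set \<Rightarrow> ('x::euclidean_space \<Rightarrow> 'u \<Rightarrow> 'x)
    \<Rightarrow> ('x \<Rightarrow> 'u \<Rightarrow> 'y) \<Rightarrow> 'u set \<Rightarrow> (real \<Rightarrow> 'x \<Rightarrow> 'y set) \<Rightarrow> bool" where
  "gen_contingent_solution T P f L U W \<longleftrightarrow>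
     extremal_map T P W \<and>
     (\<forall>t\<in>{0..<T}. \<forall>x. \<forall>y\<in>W t x. \<exists>(fb, Lb)\<in>FL f L U x.
         - Lb \<in> contingent_deriv T P W (t, x, y) (1, fb)) \<and>
     (\<forall>t\<in>{0<..T}. \<forall>x. \<forall>y\<in>W t x. \<forall>(fv, Lv)\<in>FL f L U x.
         Lv \<in> contingent_deriv T P W (t, x, y) (-1, - fv)) \<and>
     (\<forall>x. W T x = {0})"

definition up_limsup :: "real \<Rightarrow> 'y::real_normed_vector set \<Rightarrow> (real \<Rightarrow> 'x::real_normed_vector \<Rightarrow> 'y set)
    \<Rightarrow> real set \<Rightarrow> real \<Rightarrow> 'x \<Rightarrow> 'y set" where
  "up_limsup T P W J t0 x0 = {y. \<exists>ts :: nat \<Rightarrow> real. \<exists>xs :: nat \<Rightarrow> 'x. \<exists>ys :: nat \<Rightarrow> 'y.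
      (\<forall>k. ts k \<in> J \<and> ys k \<in> up_map P W (ts k) (xs k)) \<and>
      ts \<longlonglongrightarrow> t0 \<and> xs \<longlonglongrightarrow> x0 \<and> ys \<longlonglongrightarrow> y}"

definition gen_proximal_solution :: "real \<Rightarrow> 'y::euclidean_space set \<Rightarrow> ('x::euclidean_space \<Rightarrow> 'u \<Rightarrow> 'x)
    \<Rightarrow> ('x \<Rightarrow> 'u \<Rightarrow> 'y) \<Rightarrow> 'u set \<Rightarrow> (real \<Rightarrow> 'x \<Rightarrow> 'y set) \<Rightarrow> bool" where
  "gen_proximal_solution T P f L U W \<longleftrightarrow>
     extremal_map T P W \<and>
     (\<forall>t\<in>{0<..<T}. \<forall>x. \<forall>y\<in>W t x. \<forall>w. \<forall>(xi, v)\<in>coderiv T P W (t, x, y) w.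
         xi + Inf {inner v fv + inner w Lv | fv Lv. (fv, Lv) \<in> FL f L U x} = 0) \<and>
     (\<forall>x. up_map P W 0 x \<subseteq> up_limsup T P W {0<..T} 0 x \<and>
          up_map P W T x \<subseteq> up_limsup T P W {0..<T} T x) \<and>
     (\<forall>x. W T x = {0})"

end

theory Submission
  imports Defs
begin

(* The key duality: a proximal normal n and a contingent direction v at the
   same point of a set satisfy <n, v> <= 0.  Applied to the graph of
   W_up = W + P with the normal (xi, v, -w), the forward direction
   (1, fb, -Lb) from condition (i) gives xi + <v,fb> + <w,Lb> <= 0, and the
   backward directions (-1, -f, L) from condition (ii) give
   xi + <v,f> + <w,L> >= 0 for every (f, L) in (FL)(x); together these say
   that the infimum in the Hamiltonian condition equals -xi.
   For the boundary conditions, a contingent direction whose time component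
   is positive (resp. negative) is realised by graph points with times
   strictly after (resp. before) the base time; absorbing an element q of P
   into the value component shows W_up(0,x) and W_up(T,x) lie in the
   one-sided upper limits. *)

lemma proximal_normal_contingent_nonpos:
  fixes S :: "'a::real_inner set"
  assumes n: "n \<in> proximal_normal_cone S z" and v: "v \<in> contingent_cone S z"
  shows "inner n v \<le> 0"
proof -
  obtain M where M: "M > 0" "\<forall>zb\<in>S. inner n (zb - z) \<le> M * (norm (zb - z))\<^sup>2"
    using n unfolding proximal_normal_cone_def by blast
  obtain h vs where h_pos: "\<forall>k. h k > 0" and h_lim: "h \<longlonglongrightarrow> 0"
    and vs_lim: "vs \<longlonglongrightarrow> v" and in_S: "\<forall>k. z + h k *\<^sub>R vs k \<in> S"
    using v unfolding contingent_cone_def by blast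
  text \<open>Divide the proximal inequality at the point z + h k vs k by h k.\<close>
  have bound: "inner n (vs k) \<le> M * h k * (norm (vs k))\<^sup>2" for k
  proof -
    have "inner n ((z + h k *\<^sub>R vs k) - z) \<le> M * (norm ((z + h k *\<^sub>R vs k) - z))\<^sup>2"
      using M(2) in_S by blast
    hence "h k * inner n (vs k) \<le> h k * (M * h k * (norm (vs k))\<^sup>2)"
      using h_pos[rule_format, of k] by (simp add: power2_eq_square algebra_simps)
    thus ?thesis using h_pos[rule_format, of k] by simp
  qed
  have "(\<lambda>k. inner n (vs k)) \<longlonglongrightarrow> inner n v"
    by (intro tendsto_intros vs_lim)
  moreover have "(\<lambda>k. M * h k * (norm (vs k))\<^sup>2) \<longlonglongrightarrow> M * 0 * (norm v)\<^sup>2"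
    by (intro tendsto_intros vs_lim h_lim)
  ultimately show ?thesis using LIMSEQ_le bound by fastforce
qed

lemma contingent_cone_one_sided_sequence:
  fixes G :: "(real \<times> 'a::real_normed_vector) set"
  assumes cc: "(s, d) \<in> contingent_cone G (t0, w0)" and s: "s \<noteq> 0"
  obtains z where "\<And>k. z k \<in> G" "\<And>k. s * (fst (z k) - t0) > 0" "z \<longlonglongrightarrow> (t0, w0)"
proof -
  obtain h vs where h_pos: "\<forall>k. h k > 0" and h_lim: "h \<longlonglongrightarrow> 0"
    and vs_lim: "vs \<longlonglongrightarrow> (s, d)" and in_G: "\<forall>k. (t0, w0) + h k *\<^sub>R vs k \<in> G"
    using cc unfolding contingent_cone_def by blast
  define z where "z k = (t0, w0) + h k *\<^sub>R vs k" for k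
  have z_lim: "z \<longlonglongrightarrow> (t0, w0) + 0 *\<^sub>R (s, d)"
    unfolding z_def by (intro tendsto_intros h_lim vs_lim)
  have "(\<lambda>k. s * fst (vs k)) \<longlonglongrightarrow> s * s"
    using tendsto_mult[OF tendsto_const tendsto_fst[OF vs_lim]] by simp
  moreover have "s * s > 0" using s by (auto simp add: zero_less_mult_iff linorder_neq_iff)
  ultimately have "eventually (\<lambda>k. s * fst (vs k) > 0) sequentially"
    by (rule order_tendstoD(1))
  then obtain N where N: "\<And>k. k \<ge> N \<Longrightarrow> s * fst (vs k) > 0"
    unfolding eventually_sequentially by blast
  show ?thesis
  proof
    show "z (k + N) \<in> G" for k using in_G unfolding z_def by blast
    show "s * (fst (z (k + N)) - t0) > 0" for k
    proof -
      have "s * (fst (z (k + N)) - t0) = h (k + N) * (s * fst (vs (k + N)))"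
        unfolding z_def by (simp add: algebra_simps)
      also have "\<dots> > 0" using N[of "k + N"] h_pos by simp
      finally show ?thesis .
    qed
    show "(\<lambda>k. z (k + N)) \<longlonglongrightarrow> (t0, w0)"
      using LIMSEQ_ignore_initial_segment[OF z_lim, of N] by simp
  qed
qed

lemma up_map_add_cone:
  assumes y: "y \<in> up_map P W t x" and q: "q \<in> P"
    and P_add: "\<And>p q. p \<in> P \<Longrightarrow> q \<in> P \<Longrightarrow> p + q \<in> P"
  shows "y + q \<in> up_map P W t x"
proof -
  obtain w p where "w \<in> W t x" "p \<in> P" "y = w + p"
    using y unfolding up_map_def by blast
  thus ?thesis unfolding up_map_def using P_add q
    by (metis (mono_tags, lifting) add.assoc mem_Collect_eq)
qed

lemma contingent_direction_gives_limsup: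
  fixes W :: "real \<Rightarrow> 'x::euclidean_space \<Rightarrow> 'y::euclidean_space set"
  assumes cc: "(s, b, c) \<in> contingent_cone (up_graph T P W) (t0, x0, y0)"
    and s: "s \<noteq> 0"
    and side: "\<And>t. t \<in> {0..T} \<Longrightarrow> s * (t - t0) > 0 \<Longrightarrow> t \<in> J"
    and P_add: "\<And>p q. p \<in> P \<Longrightarrow> q \<in> P \<Longrightarrow> p + q \<in> P"
    and q: "q \<in> P"
  shows "y0 + q \<in> up_limsup T P W J t0 x0"
proof -
  obtain z where z_in: "\<And>k. z k \<in> up_graph T P W"
    and z_side: "\<And>k. s * (fst (z k) - t0) > 0" and z_lim: "z \<longlonglongrightarrow> (t0, x0, y0)"
    using contingent_cone_one_sided_sequence[of s "(b, c)" "up_graph T P W" t0 "(x0, y0)"] cc s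
    by blast
  define ts where "ts k = fst (z k)" for k
  define xs where "xs k = fst (snd (z k))" for k
  define ys where "ys k = snd (snd (z k)) + q" for k
  have "ts k \<in> J \<and> ys k \<in> up_map P W (ts k) (xs k)" for k
  proof
    have z_eq: "z k = (ts k, xs k, snd (snd (z k)))" unfolding ts_def xs_def by simp
    have "ts k \<in> {0..T}" and z_up: "snd (snd (z k)) \<in> up_map P W (ts k) (xs k)"
      using z_in[of k] unfolding up_graph_def by (subst (asm) z_eq; simp)+
    show "ts k \<in> J" using side[OF \<open>ts k \<in> {0..T}\<close>] z_side[of k] unfolding ts_def by simp
    show "ys k \<in> up_map P W (ts k) (xs k)"
      unfolding ys_def by (rule up_map_add_cone[OF z_up q P_add])
  qed
  moreover have "ts \<longlonglongrightarrow> t0" "xs \<longlonglongrightarrow> x0" "ys \<longlonglongrightarrow> y0 + q"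
    using tendsto_fst[OF z_lim] tendsto_fst[OF tendsto_snd[OF z_lim]]
      tendsto_add[OF tendsto_snd[OF tendsto_snd[OF z_lim]] tendsto_const]
    unfolding ts_def xs_def ys_def by simp_all
  ultimately show ?thesis unfolding up_limsup_def by blast
qed

lemma Inf_eq_attained_lower_bound:
  fixes S :: "real set"
  assumes lb: "\<And>s. s \<in> S \<Longrightarrow> m \<le> s" and s0: "s0 \<in> S" "s0 \<le> m"
  shows "Inf S = m"
proof (rule antisym)
  show "Inf S \<le> m" using cInf_lower[OF s0(1)] lb s0(2) unfolding bdd_below_def by fastforce
  show "m \<le> Inf S" using cInf_greatest[of S m] lb s0(1) by blast
qed

lemma contingent_solution_forward_direction:
  assumes W_sol: "gen_contingent_solution T P f L U W"
    and t: "t \<in> {0..<T}" and y: "y \<in> W t x"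
  obtains fb Lb where "(fb, Lb) \<in> FL f L U x"
    "(1, fb, - Lb) \<in> contingent_cone (up_graph T P W) (t, x, y)"
proof -
  have "\<forall>t\<in>{0..<T}. \<forall>x. \<forall>y\<in>W t x. \<exists>(fb, Lb)\<in>FL f L U x.
      - Lb \<in> contingent_deriv T P W (t, x, y) (1, fb)"
    using W_sol unfolding gen_contingent_solution_def by blast
  with t y obtain fb Lb where "(fb, Lb) \<in> FL f L U x"
      "- Lb \<in> contingent_deriv T P W (t, x, y) (1, fb)"
    by blast
  thus ?thesis using that unfolding contingent_deriv_def by simp
qed

lemma contingent_solution_backward_direction:
  assumes W_sol: "gen_contingent_solution T P f L U W"
    and t: "t \<in> {0<..T}" and y: "y \<in> W t x" and fl: "(fv, Lv) \<in> FL f L U x"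
  shows "(-1, - fv, Lv) \<in> contingent_cone (up_graph T P W) (t, x, y)"
proof -
  have "\<forall>t\<in>{0<..T}. \<forall>x. \<forall>y\<in>W t x. \<forall>(fv, Lv)\<in>FL f L U x.
      Lv \<in> contingent_deriv T P W (t, x, y) (-1, - fv)"
    using W_sol unfolding gen_contingent_solution_def by blast
  with t y fl have "Lv \<in> contingent_deriv T P W (t, x, y) (-1, - fv)"
    by blast
  thus ?thesis unfolding contingent_deriv_def by simp
qed

lemma contingent_solution_hamiltonian:
  assumes W_sol: "gen_contingent_solution T P f L U W"
    and t: "t \<in> {0<..<T}" and y: "y \<in> W t x"
    and cd: "(xi, v) \<in> coderiv T P W (t, x, y) w"
  shows "xi + Inf {inner v fv + inner w Lv | fv Lv. (fv, Lv) \<in> FL f L U x} = 0"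
proof -
  have n: "(xi, v, - w) \<in> proximal_normal_cone (up_graph T P W) (t, x, y)"
    using cd unfolding coderiv_def by simp
  obtain fb Lb where fb_FL: "(fb, Lb) \<in> FL f L U x"
    and fwd: "(1, fb, - Lb) \<in> contingent_cone (up_graph T P W) (t, x, y)"
  proof (rule contingent_solution_forward_direction[OF W_sol _ y])
    show "t \<in> {0..<T}" using t by simp
  qed
  have upper: "inner v fb + inner w Lb \<le> - xi"
    using proximal_normal_contingent_nonpos[OF n fwd] by (simp add: inner_prod_def)
  have lower: "- xi \<le> inner v fv + inner w Lv" if "(fv, Lv) \<in> FL f L U x" for fv Lv
  proof -
    have "(-1, - fv, Lv) \<in> contingent_cone (up_graph T P W) (t, x, y)"
      using contingent_solution_backward_direction[OF W_sol _ y that] t by simp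
    from proximal_normal_contingent_nonpos[OF n this] show ?thesis
      by (simp add: inner_prod_def)
  qed
  have "Inf {inner v fv + inner w Lv | fv Lv. (fv, Lv) \<in> FL f L U x} = - xi"
  proof (rule Inf_eq_attained_lower_bound)
    show "inner v fb + inner w Lb \<in> {inner v fv + inner w Lv | fv Lv. (fv, Lv) \<in> FL f L U x}"
      using fb_FL by blast
  qed (use lower upper in blast)+
  thus ?thesis by simp
qed

lemma contingent_solution_initial_limsup:
  assumes W_sol: "gen_contingent_solution T P f L U W" and T_pos: "T > 0"
    and P_add: "\<And>p q. p \<in> P \<Longrightarrow> q \<in> P \<Longrightarrow> p + q \<in> P"
  shows "up_map P W 0 x \<subseteq> up_limsup T P W {0<..T} 0 x"
proof
  fix y assume "y \<in> up_map P W 0 x"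
  then obtain y0 q where yq: "y = y0 + q" "y0 \<in> W 0 x" "q \<in> P" unfolding up_map_def by blast
  obtain fb Lb where "(1, fb, - Lb) \<in> contingent_cone (up_graph T P W) (0, x, y0)"
  proof (rule contingent_solution_forward_direction[OF W_sol _ yq(2)])
    show "0 \<in> {0..<T}" using T_pos by simp
  qed
  from contingent_direction_gives_limsup[OF this _ _ P_add yq(3)]
  show "y \<in> up_limsup T P W {0<..T} 0 x" unfolding yq(1) by auto
qed

lemma contingent_solution_terminal_limsup:
  assumes W_sol: "gen_contingent_solution T P f L U W" and T_pos: "T > 0"
    and U_ne: "U \<noteq> {}"
    and P_add: "\<And>p q. p \<in> P \<Longrightarrow> q \<in> P \<Longrightarrow> p + q \<in> P"
  shows "up_map P W T x \<subseteq> up_limsup T P W {0..<T} T x"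
proof
  fix y assume "y \<in> up_map P W T x"
  then obtain y0 q where yq: "y = y0 + q" "y0 \<in> W T x" "q \<in> P" unfolding up_map_def by blast
  obtain u where "u \<in> U" using U_ne by blast
  hence "(f x u, L x u) \<in> FL f L U x"
    unfolding FL_def by (auto intro: closure_subset[THEN subsetD] hull_inc)
  hence "(-1, - f x u, L x u) \<in> contingent_cone (up_graph T P W) (T, x, y0)"
    using contingent_solution_backward_direction[OF W_sol _ yq(2)] T_pos by simp
  from contingent_direction_gives_limsup[OF this _ _ P_add yq(3)]
  show "y \<in> up_limsup T P W {0..<T} T x" unfolding yq(1) by auto
qed

theorem proposition8p2:
  fixes T :: real
    and U :: "'u::euclidean_space set"
    and f :: "'x::euclidean_space \<Rightarrow> 'u \<Rightarrow> 'x"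
    and L :: "'x \<Rightarrow> 'u \<Rightarrow> 'y::euclidean_space"
    and P :: "'y set"
    and W :: "real \<Rightarrow> 'x \<Rightarrow> 'y set"
  assumes T_pos: "T > 0"
    and U_compact: "compact U" and U_ne: "U \<noteq> {}"
    and f_cont: "continuous_on (UNIV \<times> U) (\<lambda>(x, u). f x u)"
    and f_bdd: "bounded ((\<lambda>(x, u). f x u) ` (UNIV \<times> U))"
    and f_lip: "\<exists>K. \<forall>u\<in>U. \<forall>x x'. norm (f x u - f x' u) \<le> K * norm (x - x')"
    and L_cont: "continuous_on (UNIV \<times> U) (\<lambda>(x, u). L x u)"
    and L_bdd: "bounded ((\<lambda>(x, u). L x u) ` (UNIV \<times> U))"
    and L_lip: "\<exists>K. \<forall>u\<in>U. \<forall>x x'. norm (L x u - L x' u) \<le> K * norm (x - x')"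
    and P_closed: "closed P" and P_convex: "convex P" and P_cone: "cone P"
    and P_zero: "0 \<in> P" and P_pointed: "P \<inter> uminus ` P = {0}"
    and P_int: "interior P \<noteq> {}"
    and W_sol: "gen_contingent_solution T P f L U W"
  shows "gen_proximal_solution T P f L U W"
proof -
  have P_add: "\<And>p q. p \<in> P \<Longrightarrow> q \<in> P \<Longrightarrow> p + q \<in> P"
    using P_convex P_cone convex_cone by blast
  have "extremal_map T P W" and "\<forall>x. W T x = {0}"
    using W_sol unfolding gen_contingent_solution_def by blast+
  moreover have "\<forall>t\<in>{0<..<T}. \<forall>x. \<forall>y\<in>W t x. \<forall>w. \<forall>(xi, v)\<in>coderiv T P W (t, x, y) w.
      xi + Inf {inner v fv + inner w Lv | fv Lv. (fv, Lv) \<in> FL f L U x} = 0"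
    using contingent_solution_hamiltonian[OF W_sol] by blast
  moreover have "\<forall>x. up_map P W 0 x \<subseteq> up_limsup T P W {0<..T} 0 x \<and>
      up_map P W T x \<subseteq> up_limsup T P W {0..<T} T x"
    using contingent_solution_initial_limsup[OF W_sol T_pos P_add]
      contingent_solution_terminal_limsup[OF W_sol T_pos U_ne P_add] by blast
  ultimately show ?thesis
    unfolding gen_proximal_solution_def by blast
qed

end
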